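(* Let $n\ge 2$. Every harmonic function $u$ on $\mathbb R^n$ which is universal for uniform convergence is also universal for convergence in measure; that is, if the set of translates $\{u(\cdot+a): a\in\mathbb R^n\}$ is dense in the space of all harmonic functions on $\mathbb R^n$ with the topology of local uniform convergence, then for every measurable function $v:\mathbb R^n\to\mathbb R$ there is a sequence $(a_j)$ in $\mathbb R^n$ such that $u(\cdot+a_j)\to v$ in Lebesgue measure on every compact subset of $\mathbb R^n$.
   Context: Convergence in measure on a compact set $K$ means: for every $\epsilon>0$, the Lebesgue measure of $\{x\in K: |u(x+a_j)-v(x)|>\epsilon\}$ tends to $0$ as $j\to\infty$. *)

theory Defs
  imports "HOL-Analysis.Analysis"
begin

definition harmonic :: "(real^'n \<Rightarrow> real) \<Rightarrow> bool" where
  "harmonic u \<longleftrightarrow>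
     (\<exists>(u' :: real^'n \<Rightarrow> ((real^'n) \<Rightarrow>\<^sub>L real))
        (u'' :: real^'n \<Rightarrow> ((real^'n) \<Rightarrow>\<^sub>L ((real^'n) \<Rightarrow>\<^sub>L real))).
        (\<forall>x. (u has_derivative blinfun_apply (u' x)) (at x)) \<and>
        (\<forall>x. (u' has_derivative blinfun_apply (u'' x)) (at x)) \<and>
        continuous_on UNIV u'' \<and>
        (\<forall>x. (\<Sum>i\<in>UNIV. blinfun_apply (blinfun_apply (u'' x) (axis i 1)) (axis i 1)) = 0))"

definition universal_uniform :: "(real^'n \<Rightarrow> real) \<Rightarrow> bool" where
  "universal_uniform u \<longleftrightarrow>
     (\<forall>h K e. harmonic h \<longrightarrow> compact K \<longrightarrow> e > 0 \<longrightarrow>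
        (\<exists>a. \<forall>x\<in>K. \<bar>u (x + a) - h x\<bar> < e))"

end

theory Submission
  imports Defs "HOL-Computational_Algebra.Polynomial"
begin

text \<open>Translates of \<open>u\<close> approximate every harmonic function locally uniformly, so it suffices
  to approximate a measurable \<open>v\<close> in measure on every ball by harmonic functions. Measurable
  functions are almost everywhere limits of continuous ones, and by Stone-Weierstrass continuous
  functions are uniform limits of sums of ridge functions \<open>c cos (a \<bullet> x + \<phi>)\<close>; these are uniform
  limits of step functions of \<open>a \<bullet> x\<close>, i.e. of combinations of Heaviside functions of
  \<open>a \<bullet> x - t\<close>. As \<open>n \<ge> 2\<close>, there is \<open>b\<close> orthogonal to \<open>a\<close> with \<open>norm b = norm a\<close>, and then
  \<open>Re (q (a \<bullet> x + \<i> (b \<bullet> x)))\<close> is harmonic for every complex polynomial \<open>q\<close>. It remains to find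
  \<open>q\<close> approximating the Heaviside function of \<open>Re z - t\<close> uniformly on a disc minus a thin strip
  around \<open>Re z = t\<close>; the corresponding slab around \<open>a \<bullet> x = t\<close> has small measure.

  Newton's iteration
  \<open>z \<mapsto> (z + 1/z)/2\<close> converges to \<open>sgn (Re z)\<close> uniformly away from the imaginary axis,
  since it squares the Cayley transform \<open>(z - s)/(z + s)\<close>, \<open>s = sgn (Re z)\<close>; and every iterate
  is a uniform limit of polynomials, because such limits are closed under \<open>g \<mapsto> 1/g\<close> when
  \<open>Re g\<close> stays away from \<open>0\<close>.\<close>

section \<open>Uniform approximation by polynomials\<close>

definition poly_approximable :: "complex set \<Rightarrow> (complex \<Rightarrow> complex) \<Rightarrow> bool" where
  "poly_approximable E f \<longleftrightarrow> (\<forall>e>0. \<exists>p. \<forall>z\<in>E. cmod (f z - poly p z) < e)"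

lemma poly_approximable_poly: "poly_approximable E (poly p)"
  unfolding poly_approximable_def by (intro allI impI exI[of _ p]) auto

lemma poly_approximable_cong:
  assumes "poly_approximable E f" "\<And>z. z \<in> E \<Longrightarrow> f z = g z"
  shows "poly_approximable E g"
  using assms unfolding poly_approximable_def by (metis (no_types, lifting))

lemma poly_approximable_const: "poly_approximable E (\<lambda>z. c)"
  by (rule poly_approximable_cong[OF poly_approximable_poly[of E "[:c:]"]]) simp

lemma poly_approximable_ident: "poly_approximable E (\<lambda>z. z)"
  by (rule poly_approximable_cong[OF poly_approximable_poly[of E "[:0, 1:]"]]) simp

lemma poly_approximable_uniform_limit:
  assumes "\<And>e. e > 0 \<Longrightarrow> \<exists>g. poly_approximable E g \<and> (\<forall>z\<in>E. cmod (f z - g z) < e)"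
  shows "poly_approximable E f"
  unfolding poly_approximable_def
proof (intro allI impI)
  fix e :: real assume "e > 0"
  then obtain g where g: "poly_approximable E g" "\<forall>z\<in>E. cmod (f z - g z) < e/2"
    using assms[of "e/2"] by auto
  obtain p where p: "\<forall>z\<in>E. cmod (g z - poly p z) < e/2"
    using g(1) \<open>e > 0\<close> unfolding poly_approximable_def by (meson half_gt_zero)
  have "cmod (f z - poly p z) < e" if "z \<in> E" for z
    using norm_triangle_ineq[of "f z - g z" "g z - poly p z"] g(2) p that by fastforce
  then show "\<exists>p. \<forall>z\<in>E. cmod (f z - poly p z) < e" by blast
qed

lemma poly_approximable_add:
  assumes "poly_approximable E f" "poly_approximable E g"
  shows "poly_approximable E (\<lambda>z. f z + g z)"
  unfolding poly_approximable_def
proof (intro allI impI)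
  fix e :: real assume "e > 0"
  obtain p where p: "\<forall>z\<in>E. cmod (f z - poly p z) < e/2"
    using assms(1) \<open>e > 0\<close> unfolding poly_approximable_def by (meson half_gt_zero)
  obtain q where q: "\<forall>z\<in>E. cmod (g z - poly q z) < e/2"
    using assms(2) \<open>e > 0\<close> unfolding poly_approximable_def by (meson half_gt_zero)
  have "cmod (f z + g z - poly (p + q) z) < e" if "z \<in> E" for z
    using norm_triangle_ineq[of "f z - poly p z" "g z - poly q z"] p q that
    by (fastforce simp: algebra_simps)
  then show "\<exists>p. \<forall>z\<in>E. cmod (f z + g z - poly p z) < e" by blast
qed

lemma poly_approximable_cmult:
  assumes "poly_approximable E f"
  shows "poly_approximable E (\<lambda>z. c * f z)"
  unfolding poly_approximable_def
proof (intro allI impI)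
  fix e :: real assume "e > 0"
  then obtain p where p: "\<forall>z\<in>E. cmod (f z - poly p z) < e / (cmod c + 1)"
    using assms unfolding poly_approximable_def by (meson add_nonneg_pos divide_pos_pos norm_ge_zero zero_less_one)
  have "cmod (c * f z - poly (smult c p) z) < e" if "z \<in> E" for z
  proof -
    have "cmod (c * f z - poly (smult c p) z) = cmod c * cmod (f z - poly p z)"
      by (simp add: algebra_simps norm_mult[symmetric])
    also have "\<dots> \<le> (cmod c + 1) * cmod (f z - poly p z)"
      by (simp add: mult_right_mono)
    also have "\<dots> < (cmod c + 1) * (e / (cmod c + 1))"
      using p that by (intro mult_strict_left_mono) (auto simp: add_nonneg_pos)
    also have "\<dots> = e"
      using norm_ge_zero[of c] by (metis add_nonneg_pos nonzero_mult_div_cancel_left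
          times_divide_eq_right zero_less_one less_irrefl)
    finally show ?thesis .
  qed
  then show "\<exists>p. \<forall>z\<in>E. cmod (c * f z - poly p z) < e" by blast
qed

lemma poly_approximable_mult:
  assumes "poly_approximable E f" "poly_approximable E g"
    and "\<And>z. z \<in> E \<Longrightarrow> cmod (f z) \<le> B" "\<And>z. z \<in> E \<Longrightarrow> cmod (g z) \<le> B"
  shows "poly_approximable E (\<lambda>z. f z * g z)"
  unfolding poly_approximable_def
proof (intro allI impI)
  fix e :: real assume e: "e > 0"
  define d where "d = min 1 (e / (2 * \<bar>B\<bar> + 2))"
  have d: "0 < d" "d \<le> 1" "d * (2 * \<bar>B\<bar> + 1) < e"
  proof -
    show "0 < d" "d \<le> 1" using e by (simp_all add: d_def add_pos_nonneg)
    have "d * (2 * \<bar>B\<bar> + 1) \<le> (e / (2 * \<bar>B\<bar> + 2)) * (2 * \<bar>B\<bar> + 1)"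
      by (intro mult_right_mono) (auto simp: d_def)
    also have "\<dots> < e" using e by (simp add: field_simps)
    finally show "d * (2 * \<bar>B\<bar> + 1) < e" .
  qed
  obtain p where p: "\<forall>z\<in>E. cmod (f z - poly p z) < d"
    using assms(1) d unfolding poly_approximable_def by blast
  obtain q where q: "\<forall>z\<in>E. cmod (g z - poly q z) < d"
    using assms(2) d unfolding poly_approximable_def by blast
  have "cmod (f z * g z - poly (p * q) z) < e" if z: "z \<in> E" for z
  proof -
    have q_bound: "cmod (poly q z) \<le> \<bar>B\<bar> + 1"
      using norm_triangle_sub[of "poly q z" "g z"] q z assms(4)[OF z] d(2)
      by (smt (verit) norm_minus_commute)
    have "cmod (f z * g z - poly (p * q) z)
        = cmod ((f z - poly p z) * poly q z + f z * (g z - poly q z))"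
      by (simp add: algebra_simps)
    also have "\<dots> \<le> cmod (f z - poly p z) * cmod (poly q z) + cmod (f z) * cmod (g z - poly q z)"
      by (rule order_trans[OF norm_triangle_ineq]) (simp add: norm_mult)
    also have "\<dots> \<le> d * (\<bar>B\<bar> + 1) + \<bar>B\<bar> * d"
      using p q z q_bound assms(3)[OF z] d(1) by (intro add_mono mult_mono) auto
    also have "\<dots> < e" using d(3) by (simp add: algebra_simps)
    finally show ?thesis .
  qed
  then show "\<exists>p. \<forall>z\<in>E. cmod (f z * g z - poly p z) < e" by blast
qed

lemma poly_approximable_sum:
  assumes "\<And>k. k \<in> A \<Longrightarrow> poly_approximable E (f k)"
  shows "poly_approximable E (\<lambda>z. \<Sum>k\<in>A. f k z)"
  using assms
proof (induction A rule: infinite_finite_induct)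
  case (insert x F)
  then show ?case using poly_approximable_add[of E "f x" "\<lambda>z. \<Sum>k\<in>F. f k z"] by simp
qed (simp_all add: poly_approximable_const)

lemma poly_approximable_power:
  assumes "poly_approximable E q" "\<And>z. z \<in> E \<Longrightarrow> cmod (q z) \<le> 1"
  shows "poly_approximable E (\<lambda>z. q z ^ k)"
proof (induction k)
  case 0
  then show ?case by (simp add: poly_approximable_const)
next
  case (Suc k)
  have "cmod (q z ^ k) \<le> 1" if "z \<in> E" for z
    using assms(2)[OF that] by (simp add: norm_power power_le_one)
  then show ?case
    using poly_approximable_mult[OF assms(1) Suc.IH, of 1] assms(2) by simp
qed

lemma poly_approximable_geometric:
  assumes "poly_approximable E q" "\<And>z. z \<in> E \<Longrightarrow> cmod (q z) \<le> 1/2"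
  shows "poly_approximable E (\<lambda>z. 1 / (1 - q z))"
proof (rule poly_approximable_uniform_limit)
  fix e :: real assume e: "e > 0"
  obtain m :: nat where m: "(1/2) ^ m < e / 2"
    using real_arch_pow_inv[of "e/2" "1/2::real"] e by auto
  have "poly_approximable E (\<lambda>z. \<Sum>k<m. q z ^ k)"
    using assms by (intro poly_approximable_sum poly_approximable_power) fastforce+
  moreover have "cmod (1 / (1 - q z) - (\<Sum>k<m. q z ^ k)) < e" if z: "z \<in> E" for z
  proof -
    have qz: "cmod (q z) \<le> 1/2" using assms(2)[OF z] .
    then have "q z \<noteq> 1" by auto
    have denom: "1/2 \<le> cmod (1 - q z)"
      using norm_triangle_ineq[of "1 - q z" "q z"] qz by simp
    have "1 / (1 - q z) - (\<Sum>k<m. q z ^ k) = q z ^ m / (1 - q z)"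
      using \<open>q z \<noteq> 1\<close> by (simp add: sum_gp_strict field_simps)
    then have "cmod (1 / (1 - q z) - (\<Sum>k<m. q z ^ k)) = cmod (q z) ^ m / cmod (1 - q z)"
      by (simp add: norm_divide norm_power)
    also have "\<dots> \<le> (1/2) ^ m / (1/2)"
      using qz denom by (intro frac_le power_mono) auto
    also have "\<dots> < e" using m by simp
    finally show ?thesis .
  qed
  ultimately show "\<exists>g. poly_approximable E g \<and> (\<forall>z\<in>E. cmod (1 / (1 - q z) - g z) < e)"
    by blast
qed

lemma poly_approximable_compose_affine:
  assumes "poly_approximable E f" "\<And>z. z \<in> E' \<Longrightarrow> c * z + d \<in> E"
  shows "poly_approximable E' (\<lambda>z. f (c * z + d))"
  unfolding poly_approximable_def
proof (intro allI impI)
  fix e :: real assume "e > 0"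
  then obtain p where "\<forall>z\<in>E. cmod (f z - poly p z) < e"
    using assms(1) unfolding poly_approximable_def by blast
  then have "\<forall>z\<in>E'. cmod (f (c * z + d) - poly (pcompose p [:d, c:]) z) < e"
    using assms(2) by (simp add: poly_pcompose ac_simps)
  then show "\<exists>p. \<forall>z\<in>E'. cmod (f (c * z + d) - poly p z) < e" by blast
qed

lemma poly_approximable_inverse_far:
  assumes "poly_approximable E g" "\<And>z. z \<in> E \<Longrightarrow> cmod (g z) \<le> B"
    and "2 * B \<le> cmod c" "c \<noteq> 0"
  shows "poly_approximable E (\<lambda>z. 1 / (g z - c))"
proof -
  have "poly_approximable E (\<lambda>z. 1 / (1 - g z / c))"
  proof (rule poly_approximable_geometric)
    show "poly_approximable E (\<lambda>z. g z / c)"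
      using poly_approximable_cmult[OF assms(1), of "1 / c"] by simp
    show "cmod (g z / c) \<le> 1/2" if "z \<in> E" for z
      using assms(2)[OF that] assms(3,4) by (simp add: norm_divide field_simps)
  qed
  then have "poly_approximable E (\<lambda>z. (- 1 / c) * (1 / (1 - g z / c)))"
    by (rule poly_approximable_cmult)
  moreover have "(- 1 / c) * (1 / (1 - g z / c)) = 1 / (g z - c)" for z
    using assms(4) by (cases "g z = c") (simp_all add: field_simps)
  ultimately show ?thesis by simp
qed

lemma poly_approximable_inverse_shift:
  assumes approx: "poly_approximable E (\<lambda>z. 1 / (g z - c))"
    and far: "\<And>z. z \<in> E \<Longrightarrow> m \<le> cmod (g z - c)" and "m > 0"
    and close: "cmod (c' - c) \<le> m / 2"
  shows "poly_approximable E (\<lambda>z. 1 / (g z - c'))"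
proof -
  define q where "q z = (c' - c) * (1 / (g z - c))" for z
  have q_small: "cmod (q z) \<le> 1/2" if "z \<in> E" for z
  proof -
    have "cmod (q z) = cmod (c' - c) / cmod (g z - c)"
      by (simp add: q_def norm_divide norm_mult)
    also have "\<dots> \<le> (m / 2) / m"
      using far[OF that] \<open>m > 0\<close> close by (intro frac_le) auto
    finally show ?thesis using \<open>m > 0\<close> by simp
  qed
  have "poly_approximable E (\<lambda>z. 1 / (g z - c) * (1 / (1 - q z)))"
  proof (rule poly_approximable_mult[where B = "max (1 / m) 2"])
    show "poly_approximable E (\<lambda>z. 1 / (1 - q z))"
      using poly_approximable_cmult[OF approx] q_small
      by (intro poly_approximable_geometric) (auto simp: q_def)
    fix z assume z: "z \<in> E"
    have "cmod (1 / (g z - c)) \<le> 1 / m"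
      using far[OF z] \<open>m > 0\<close> by (simp add: norm_divide divide_simps)
    then show "cmod (1 / (g z - c)) \<le> max (1 / m) 2" by linarith
    have "1/2 \<le> cmod (1 - q z)"
      using norm_triangle_ineq[of "1 - q z" "q z"] q_small[OF z] by simp
    then have "cmod (1 / (1 - q z)) \<le> 2"
      by (simp add: norm_divide divide_simps)
    then show "cmod (1 / (1 - q z)) \<le> max (1 / m) 2" by linarith
  qed (rule approx)
  moreover have "1 / (g z - c) * (1 / (1 - q z)) = 1 / (g z - c')" if "z \<in> E" for z
  proof -
    have "g z - c \<noteq> 0" using far[OF that] \<open>m > 0\<close> by auto
    then have "(g z - c) * (1 - q z) = g z - c'" by (simp add: q_def field_simps)
    then show ?thesis by (simp add: divide_divide_eq_left mult.commute)
  qed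
  ultimately show ?thesis by (rule poly_approximable_cong)
qed

text \<open>The pole \<open>c\<close> of \<open>1 / (g z - c)\<close> is moved along the imaginary axis from far away
  to \<open>0\<close> in steps of length \<open>m / 2\<close>; the hypothesis on \<open>Re (g z)\<close> keeps it at distance
  \<open>m\<close> from the values of \<open>g\<close> throughout.\<close>
lemma poly_approximable_inverse:
  assumes g: "poly_approximable E g" and B: "\<And>z. z \<in> E \<Longrightarrow> cmod (g z) \<le> B"
    and "m > 0" and m: "\<And>z. z \<in> E \<Longrightarrow> m \<le> \<bar>Re (g z)\<bar>"
  shows "poly_approximable E (\<lambda>z. 1 / g z)"
proof -
  define c where "c j = \<i> * of_real (real j * (m / 2))" for j :: nat
  have far: "m \<le> cmod (g z - c j)" if "z \<in> E" for z j
    using m[OF that] abs_Re_le_cmod[of "g z - c j"] by (simp add: c_def)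
  obtain N :: nat where N: "2 * \<bar>B\<bar> < real N * (m / 2)"
    using reals_Archimedean3[of "m / 2"] \<open>m > 0\<close> by (meson half_gt_zero)
  have "poly_approximable E (\<lambda>z. 1 / (g z - c j))" if "j \<le> N" for j
    using that
  proof (induction j rule: inc_induct)
    case base
    have "N \<noteq> 0" using N by (cases "N = 0") auto
    then show ?case
      using N \<open>m > 0\<close> by (intro poly_approximable_inverse_far[OF g B])
        (auto simp: c_def norm_mult)
  next
    case (step j)
    have "c j - c (Suc j) = \<i> * of_real (- (m / 2))"
      by (simp add: c_def algebra_simps)
    then have "cmod (c j - c (Suc j)) = m / 2"
      using \<open>m > 0\<close> by (simp add: norm_mult)
    then show ?case
      using \<open>m > 0\<close> by (intro poly_approximable_inverse_shift[OF step.IH far]) auto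
  qed
  from this[of 0] show ?thesis by (simp add: c_def)
qed

section \<open>Newton's iteration for the sign of the real part\<close>

fun sign_newton :: "nat \<Rightarrow> complex \<Rightarrow> complex" where
  "sign_newton 0 z = z"
| "sign_newton (Suc k) z = (sign_newton k z + 1 / sign_newton k z) / 2"

lemma sign_newton_Re_lower:
  assumes "0 < s * Re z"
  shows "s * Re z / 2 ^ k \<le> s * Re (sign_newton k z)"
proof (induction k)
  case (Suc k)
  let ?w = "sign_newton k z"
  have pos: "0 \<le> s * Re ?w"
    using Suc.IH assms by (smt (verit) divide_pos_pos zero_less_power)
  have "Re (1 / ?w) = Re ?w / (cmod ?w)^2" by (simp add: Re_divide cmod_power2)
  then have "Re (sign_newton (Suc k) z) = Re ?w * (1 + 1 / (cmod ?w)^2) / 2"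
    by (simp add: field_simps)
  then have "s * Re (sign_newton (Suc k) z) = s * Re ?w * (1 + 1 / (cmod ?w)^2) / 2"
    by (metis mult.assoc times_divide_eq_right)
  also have "\<dots> \<ge> s * Re ?w * 1 / 2"
    using pos by (intro divide_right_mono mult_left_mono) auto
  finally have "s * Re ?w / 2 \<le> s * Re (sign_newton (Suc k) z)" by (simp only: mult_1_right)
  moreover have "s * Re z / 2 ^ Suc k \<le> s * Re ?w / 2"
    using Suc.IH by (simp add: field_simps)
  ultimately show ?case by linarith
qed simp

corollary sign_newton_Re_pos: "0 < s * Re z \<Longrightarrow> 0 < s * Re (sign_newton k z)"
  using sign_newton_Re_lower[of s z k] by (smt (verit) divide_pos_pos zero_less_power)

lemma abs_Re_sign_newton_lower:
  assumes "1 \<le> \<bar>Re z\<bar>"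
  shows "1 / 2 ^ k \<le> \<bar>Re (sign_newton k z)\<bar>"
proof -
  have "sgn (Re z) * Re z = \<bar>Re z\<bar>" by (simp add: sgn_mult_self_eq abs_mult_self_eq sgn_real_def)
  then have "\<bar>Re z\<bar> / 2 ^ k \<le> sgn (Re z) * Re (sign_newton k z)"
    using sign_newton_Re_lower[of "sgn (Re z)" z k] assms by simp
  also have "\<dots> \<le> \<bar>Re (sign_newton k z)\<bar>" by (auto simp: sgn_real_def)
  finally show ?thesis using assms by (smt (verit) divide_right_mono zero_le_power)
qed

lemma sign_newton_bounded:
  "\<exists>B. \<forall>z. 1 \<le> \<bar>Re z\<bar> \<and> cmod z \<le> K \<longrightarrow> cmod (sign_newton k z) \<le> B"
proof (induction k)
  case (Suc k)
  then obtain B where B: "\<And>z. 1 \<le> \<bar>Re z\<bar> \<and> cmod z \<le> K \<Longrightarrow> cmod (sign_newton k z) \<le> B"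
    by blast
  have "cmod (sign_newton (Suc k) z) \<le> (B + 2 ^ k) / 2" if z: "1 \<le> \<bar>Re z\<bar> \<and> cmod z \<le> K" for z
  proof -
    let ?w = "sign_newton k z"
    have lower: "1 / 2 ^ k \<le> cmod ?w"
      using abs_Re_sign_newton_lower[of z k] abs_Re_le_cmod[of ?w] z by linarith
    moreover have "0 < cmod ?w"
      using lower by (smt (verit) divide_pos_pos zero_less_power)
    ultimately have "cmod (1 / ?w) \<le> 2 ^ k"
      by (simp add: norm_divide field_simps)
    then have "(cmod ?w + cmod (1 / ?w)) / 2 \<le> (B + 2 ^ k) / 2"
      using B[OF z] by (intro divide_right_mono add_mono) auto
    moreover have "cmod (sign_newton (Suc k) z) \<le> (cmod ?w + cmod (1 / ?w)) / 2"
      using norm_triangle_ineq[of ?w "1 / ?w"] by (simp add: norm_divide)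
    ultimately show ?thesis by linarith
  qed
  then show ?case by blast
qed auto

lemma poly_approximable_sign_newton:
  "poly_approximable {z. 1 \<le> \<bar>Re z\<bar> \<and> cmod z \<le> K} (sign_newton k)"
proof (induction k)
  case 0
  have "sign_newton 0 = (\<lambda>z. z)" by auto
  then show ?case by (simp add: poly_approximable_ident)
next
  case (Suc k)
  obtain B where "\<And>z. 1 \<le> \<bar>Re z\<bar> \<and> cmod z \<le> K \<Longrightarrow> cmod (sign_newton k z) \<le> B"
    using sign_newton_bounded[of K k] by blast
  then have "poly_approximable {z. 1 \<le> \<bar>Re z\<bar> \<and> cmod z \<le> K} (\<lambda>z. 1 / sign_newton k z)"
    using abs_Re_sign_newton_lower
    by (intro poly_approximable_inverse[OF Suc.IH, of B "1 / 2 ^ k"]) auto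
  then have "poly_approximable {z. 1 \<le> \<bar>Re z\<bar> \<and> cmod z \<le> K}
      (\<lambda>z. (1 / 2) * (sign_newton k z + 1 / sign_newton k z))"
    by (intro poly_approximable_cmult poly_approximable_add Suc.IH)
  then show ?case by (simp add: ac_simps)
qed

lemma newton_step_cayley:
  fixes w c :: complex
  assumes "w \<noteq> 0" "c * c = 1" "w + c \<noteq> 0"
  shows "((w + 1 / w) / 2 - c) / ((w + 1 / w) / 2 + c) = ((w - c) / (w + c))\<^sup>2"
proof -
  have "(w + 1 / w) / 2 + d = (w + d)\<^sup>2 / (2 * w)" if "d * d = 1" for d
  proof -
    have "(w + d)\<^sup>2 = w * w + 2 * d * w + 1" using that by (simp add: power2_eq_square algebra_simps)
    then show ?thesis using assms(1) by (simp add: field_simps)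
  qed
  from this[of "- c"] this[of c] show ?thesis
    using assms by (simp add: power_divide)
qed

lemma sign_newton_add_neq_zero:
  assumes "\<bar>s\<bar> = 1" "0 < s * Re z"
  shows "sign_newton k z + of_real s \<noteq> 0"
proof
  assume "sign_newton k z + of_real s = 0"
  then have "Re (sign_newton k z) = - s" by (simp add: complex_eq_iff)
  then have "s * Re (sign_newton k z) = - (\<bar>s\<bar> * \<bar>s\<bar>)" by (simp add: abs_mult_self_eq)
  then show False using sign_newton_Re_pos[OF assms(2), of k] assms(1) by simp
qed

lemma norm_cayley_sign_newton:
  assumes "\<bar>s\<bar> = 1" "0 < s * Re z"
  shows "cmod ((sign_newton k z - s) / (sign_newton k z + s)) = cmod ((z - s) / (z + s)) ^ (2 ^ k)"
proof (induction k)
  case (Suc k)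
  let ?w = "sign_newton k z"
  have ss: "of_real s * of_real s = (1 :: complex)"
    using assms(1) by (metis abs_mult_self_eq mult.right_neutral of_real_1 of_real_mult)
  have "?w \<noteq> 0" using sign_newton_Re_pos[OF assms(2), of k] by auto
  then have "cmod ((sign_newton (Suc k) z - s) / (sign_newton (Suc k) z + s))
      = cmod ((?w - s) / (?w + s)) ^ 2"
    using newton_step_cayley[OF _ ss sign_newton_add_neq_zero[OF assms]] by (simp add: norm_power)
  then show ?case using Suc.IH by (simp add: power_mult[symmetric] mult.commute)
qed simp

lemma norm_cayley_bound:
  assumes "\<bar>s\<bar> = 1" "1 \<le> s * Re z" "cmod z \<le> K"
  shows "cmod ((z - s) / (z + s)) ^ 2 \<le> 1 - 4 / (K + 1) ^ 2"
proof -
  have s1: "cmod (of_real s :: complex) = 1" using assms(1) by simp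
  have "cmod (z + s) ^ 2 = (Re z + s) ^ 2 + (Im z) ^ 2" "cmod (z - s) ^ 2 = (Re z - s) ^ 2 + (Im z) ^ 2"
    by (simp_all add: cmod_power2)
  then have plus_minus: "cmod (z + s) ^ 2 = cmod (z - s) ^ 2 + 4 * (s * Re z)"
    by (simp add: power2_eq_square algebra_simps)
  then have pos: "0 < cmod (z + s) ^ 2" using assms(2) by (smt (verit) zero_le_power2)
  have "cmod (z + s) \<le> K + 1"
    using norm_triangle_ineq[of z "of_real s"] s1 assms(3) by linarith
  then have upper: "cmod (z + s) ^ 2 \<le> (K + 1) ^ 2" by (intro power_mono) auto
  have "cmod ((z - s) / (z + s)) ^ 2 = 1 - 4 * (s * Re z) / cmod (z + s) ^ 2"
    using pos plus_minus by (simp add: norm_divide power_divide field_simps)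
  also have "\<dots> \<le> 1 - 4 / cmod (z + s) ^ 2"
    using pos assms(2) by (simp add: divide_right_mono)
  also have "\<dots> \<le> 1 - 4 / (K + 1) ^ 2"
    using pos upper by (simp add: frac_le)
  finally show ?thesis .
qed

lemma norm_diff_le_cayley:
  fixes w :: complex and s :: real
  assumes "\<bar>s\<bar> = 1" "w + s \<noteq> 0" "cmod ((w - s) / (w + s)) \<le> 1/2"
  shows "cmod (w - s) \<le> 4 * cmod ((w - s) / (w + s))"
proof -
  define q where "q = (w - s) / (w + s)"
  have "w - s = q * ((w - s) + 2 * of_real s)"
    using assms(2) by (simp add: q_def field_simps)
  then have "cmod (w - s) = cmod q * cmod ((w - s) + 2 * of_real s)"
    by (metis norm_mult)
  also have "\<dots> \<le> cmod q * (cmod (w - s) + cmod (2 * complex_of_real s))"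
    by (rule mult_left_mono[OF norm_triangle_ineq]) simp
  also have "cmod (2 * complex_of_real s) = 2" using assms(1) by (simp add: norm_mult)
  finally have "cmod (w - s) \<le> cmod q * (cmod (w - s) + 2)" .
  then have bound: "cmod (w - s) * (1 - cmod q) \<le> 2 * cmod q" by (simp add: algebra_simps)
  have "1/2 \<le> 1 - cmod q" using assms(3) by (simp add: q_def)
  then have "cmod (w - s) * (1/2) \<le> cmod (w - s) * (1 - cmod q)" by (rule mult_left_mono) simp
  with bound show ?thesis unfolding q_def by linarith
qed

lemma sign_newton_uniform_convergence:
  assumes "e > 0"
  shows "\<exists>k. \<forall>z. 1 \<le> \<bar>Re z\<bar> \<and> cmod z \<le> K \<longrightarrow> cmod (sign_newton k z - sgn (Re z)) < e"
proof -
  define \<theta> where "\<theta> = 1 - 4 / (max K 1 + 1) ^ 2"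
  have "0 \<le> \<theta>"
  proof -
    have "(2::real) ^ 2 \<le> (max K 1 + 1) ^ 2" by (intro power_mono) auto
    then show ?thesis by (simp add: \<theta>_def field_simps)
  qed
  moreover have "\<theta> < 1" by (simp add: \<theta>_def add_pos_nonneg)
  define d where "d = min (e / 4) (1 / 2)"
  have "0 < d" using assms by (simp add: d_def)
  then obtain k where k: "\<theta> ^ k < d ^ 2"
    using real_arch_pow_inv[of "d ^ 2" \<theta>] \<open>\<theta> < 1\<close> by auto
  have "cmod (sign_newton k z - sgn (Re z)) < e" if z: "1 \<le> \<bar>Re z\<bar>" "cmod z \<le> K" for z
  proof -
    define s where "s = sgn (Re z)"
    have s: "\<bar>s\<bar> = 1" "s * Re z = \<bar>Re z\<bar>" using z(1) by (auto simp: s_def sgn_real_def)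
    define w where "w = sign_newton k z"
    have "cmod ((w - s) / (w + s)) ^ 2 = (cmod ((z - s) / (z + s)) ^ 2) ^ (2 ^ k)"
      using norm_cayley_sign_newton[of s z k] s z(1)
      by (simp add: w_def power_mult[symmetric] mult.commute)
    also have "\<dots> \<le> \<theta> ^ (2 ^ k)"
      using norm_cayley_bound[of s z "max K 1"] s z by (intro power_mono) (auto simp: \<theta>_def)
    also have "\<dots> \<le> \<theta> ^ k"
      using \<open>0 \<le> \<theta>\<close> \<open>\<theta> < 1\<close> by (intro power_decreasing) (auto intro: less_imp_le less_exp)
    finally have "cmod ((w - s) / (w + s)) < d"
      using k \<open>0 < d\<close> by (smt (verit) power_mono norm_ge_zero)
    moreover have "w + s \<noteq> 0"
      using sign_newton_add_neq_zero[of s z k] s z(1) by (simp add: w_def)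
    ultimately have "cmod (w - s) \<le> 4 * cmod ((w - s) / (w + s))"
      using s(1) by (intro norm_diff_le_cayley) (auto simp: d_def)
    also have "\<dots> < e" using \<open>cmod ((w - s) / (w + s)) < d\<close> by (simp add: d_def)
    finally show ?thesis by (simp add: w_def s_def)
  qed
  then show ?thesis by blast
qed

lemma poly_approximable_sign:
  "poly_approximable {z. 1 \<le> \<bar>Re z\<bar> \<and> cmod z \<le> K} (\<lambda>z. sgn (Re z))"
proof (rule poly_approximable_uniform_limit)
  fix e :: real assume "e > 0"
  then obtain k where "\<forall>z. 1 \<le> \<bar>Re z\<bar> \<and> cmod z \<le> K \<longrightarrow> cmod (sign_newton k z - sgn (Re z)) < e"
    using sign_newton_uniform_convergence by blast
  then show "\<exists>g. poly_approximable {z. 1 \<le> \<bar>Re z\<bar> \<and> cmod z \<le> K} g \<and>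
      (\<forall>z\<in>{z. 1 \<le> \<bar>Re z\<bar> \<and> cmod z \<le> K}. cmod (of_real (sgn (Re z)) - g z) < e)"
    by (intro exI[of _ "sign_newton k"]) (auto simp: poly_approximable_sign_newton norm_minus_commute)
qed

lemma poly_approximable_heaviside:
  assumes "\<delta> > 0"
  shows "poly_approximable {z. cmod z \<le> K \<and> \<delta> \<le> \<bar>Re z - t\<bar>} (\<lambda>z. if t \<le> Re z then 1 else 0)"
proof -
  let ?E = "{z. cmod z \<le> K \<and> \<delta> \<le> \<bar>Re z - t\<bar>}"
  let ?\<phi> = "\<lambda>z. of_real (1 / \<delta>) * z + of_real (- t / \<delta>)"
  have Re_\<phi>: "Re (?\<phi> z) = (Re z - t) / \<delta>" for z by (simp add: diff_divide_distrib)
  have "?\<phi> z \<in> {z. 1 \<le> \<bar>Re z\<bar> \<and> cmod z \<le> (\<bar>K\<bar> + \<bar>t\<bar>) / \<delta>}" if "z \<in> ?E" for z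
  proof -
    have "cmod (?\<phi> z) = cmod (z - of_real t) / \<delta>"
      using assms by (simp add: norm_divide norm_mult field_simps)
    also have "\<dots> \<le> (\<bar>K\<bar> + \<bar>t\<bar>) / \<delta>"
      using norm_triangle_ineq4[of z "of_real t"] that assms by (intro divide_right_mono) auto
    moreover have "1 \<le> \<bar>Re (?\<phi> z)\<bar>"
      unfolding Re_\<phi> using that assms by (simp add: abs_divide le_divide_eq)
    ultimately show ?thesis by simp
  qed
  then have "poly_approximable ?E (\<lambda>z. sgn (Re (?\<phi> z)))"
    by (rule poly_approximable_compose_affine[OF poly_approximable_sign])
  then have "poly_approximable ?E (\<lambda>z. (1 / 2) * (1 + complex_of_real (sgn (Re (?\<phi> z)))))"
    by (intro poly_approximable_cmult poly_approximable_add poly_approximable_const)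
  moreover have "(1 / 2) * (1 + complex_of_real (sgn (Re (?\<phi> z)))) = (if t \<le> Re z then 1 else 0)"
    if "z \<in> ?E" for z
    using that assms unfolding Re_\<phi> by (auto simp: sgn_real_def zero_less_divide_iff divide_less_0_iff)
  ultimately show ?thesis by (rule poly_approximable_cong)
qed

section \<open>Harmonic functions\<close>

lemma harmonic_const: "harmonic (\<lambda>x. c)"
  unfolding harmonic_def
  by (intro exI[of _ "\<lambda>x. 0"]) (auto simp: zero_blinfun.rep_eq intro: has_derivative_const)

lemma harmonic_add:
  assumes "harmonic f" "harmonic g"
  shows "harmonic (\<lambda>x. f x + g x)"
proof -
  obtain f' f'' where f: "\<forall>x. (f has_derivative blinfun_apply (f' x)) (at x)"
      "\<forall>x. (f' has_derivative blinfun_apply (f'' x)) (at x)" "continuous_on UNIV f''"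
      "\<forall>x. (\<Sum>i\<in>UNIV. blinfun_apply (blinfun_apply (f'' x) (axis i 1)) (axis i 1)) = 0"
    using assms(1) unfolding harmonic_def by blast
  obtain g' g'' where g: "\<forall>x. (g has_derivative blinfun_apply (g' x)) (at x)"
      "\<forall>x. (g' has_derivative blinfun_apply (g'' x)) (at x)" "continuous_on UNIV g''"
      "\<forall>x. (\<Sum>i\<in>UNIV. blinfun_apply (blinfun_apply (g'' x) (axis i 1)) (axis i 1)) = 0"
    using assms(2) unfolding harmonic_def by blast
  show ?thesis
    unfolding harmonic_def
  proof (intro exI[of _ "\<lambda>x. f' x + g' x"] exI[of _ "\<lambda>x. f'' x + g'' x"] conjI allI)
    fix x
    show "((\<lambda>x. f x + g x) has_derivative blinfun_apply (f' x + g' x)) (at x)"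
      using has_derivative_add[OF f(1)[rule_format, of x] g(1)[rule_format, of x]]
      by (simp add: plus_blinfun.rep_eq)
    show "((\<lambda>x. f' x + g' x) has_derivative blinfun_apply (f'' x + g'' x)) (at x)"
      using has_derivative_add[OF f(2)[rule_format, of x] g(2)[rule_format, of x]]
      by (simp add: plus_blinfun.rep_eq)
    show "(\<Sum>i\<in>UNIV. blinfun_apply (blinfun_apply (f'' x + g'' x) (axis i 1)) (axis i 1)) = 0"
      using f(4) g(4) by (simp add: plus_blinfun.rep_eq sum.distrib)
  qed (use f(3) g(3) in \<open>intro continuous_intros\<close>)
qed

lemma harmonic_cmult:
  assumes "harmonic f"
  shows "harmonic (\<lambda>x. c * f x)"
proof -
  obtain f' f'' where f: "\<forall>x. (f has_derivative blinfun_apply (f' x)) (at x)"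
      "\<forall>x. (f' has_derivative blinfun_apply (f'' x)) (at x)" "continuous_on UNIV f''"
      "\<forall>x. (\<Sum>i\<in>UNIV. blinfun_apply (blinfun_apply (f'' x) (axis i 1)) (axis i 1)) = 0"
    using assms unfolding harmonic_def by blast
  show ?thesis
    unfolding harmonic_def
  proof (intro exI[of _ "\<lambda>x. c *\<^sub>R f' x"] exI[of _ "\<lambda>x. c *\<^sub>R f'' x"] conjI allI)
    fix x
    show "((\<lambda>x. c * f x) has_derivative blinfun_apply (c *\<^sub>R f' x)) (at x)"
      using has_derivative_scaleR_right[OF f(1)[rule_format, of x], of c]
      by (simp add: scaleR_blinfun.rep_eq)
    show "((\<lambda>x. c *\<^sub>R f' x) has_derivative blinfun_apply (c *\<^sub>R f'' x)) (at x)"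
      using has_derivative_scaleR_right[OF f(2)[rule_format, of x], of c]
      by (simp add: scaleR_blinfun.rep_eq)
    show "(\<Sum>i\<in>UNIV. blinfun_apply (blinfun_apply (c *\<^sub>R f'' x) (axis i 1)) (axis i 1)) = 0"
      using f(4) by (simp add: scaleR_blinfun.rep_eq sum_distrib_left[symmetric])
  qed (use f(3) in \<open>intro continuous_intros\<close>)
qed

lemma harmonic_continuous:
  assumes "harmonic u"
  shows "continuous_on UNIV u"
proof -
  obtain u' where "\<forall>x. (u has_derivative blinfun_apply (u' x)) (at x)"
    using assms unfolding harmonic_def by blast
  then show ?thesis
    by (intro continuous_at_imp_continuous_on ballI) (auto intro: has_derivative_continuous)
qed

lemma has_derivative_poly_linear:
  fixes Z :: "'a::real_normed_vector \<Rightarrow> 'b::real_normed_field"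
  assumes "bounded_linear Z"
  shows "((\<lambda>x. poly q (Z x)) has_derivative (\<lambda>h. poly (pderiv q) (Z x) * Z h)) (at x)"
  using has_derivative_compose[OF bounded_linear_imp_has_derivative[OF assms]
      poly_DERIV[of q "Z x", unfolded has_field_derivative_def]] .

lemma isotropic_sum_square_eq_0:
  fixes a b :: "real^'n"
  assumes "a \<bullet> b = 0" "norm a = norm b"
  shows "(\<Sum>i\<in>UNIV. (complex_of_real (a $ i) + \<i> * complex_of_real (b $ i))\<^sup>2) = 0"
proof -
  have "(\<Sum>i\<in>UNIV. (complex_of_real (a $ i) + \<i> * complex_of_real (b $ i))\<^sup>2)
      = of_real (a \<bullet> a - b \<bullet> b) + 2 * \<i> * of_real (a \<bullet> b)"
    by (simp add: inner_vec_def power2_eq_square algebra_simps sum.distrib sum_subtractf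
        sum_distrib_left)
  also have "\<dots> = 0" using assms by (simp add: power2_norm_eq_inner[symmetric])
  finally show ?thesis .
qed

lemma exists_blinfun_Re_mult:
  fixes a b :: "'a::real_inner"
  assumes Z: "\<And>h. Z h = complex_of_real (a \<bullet> h) + \<i> * complex_of_real (b \<bullet> h)"
  obtains L :: "complex \<Rightarrow> 'a \<Rightarrow>\<^sub>L real" and Q :: "complex \<Rightarrow> 'a \<Rightarrow>\<^sub>L 'a \<Rightarrow>\<^sub>L real"
  where "\<And>c h. blinfun_apply (L c) h = Re (c * Z h)"
    "\<And>c h k. blinfun_apply (blinfun_apply (Q c) h) k = Re (c * (Z h * Z k))"
    "bounded_linear L" "bounded_linear Q"
proof
  define A where "A = blinfun_inner_right a"
  define B where "B = blinfun_inner_right b"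
  define M1 :: "'a \<Rightarrow>\<^sub>L 'a \<Rightarrow>\<^sub>L real" where "M1 = Blinfun (\<lambda>h. (a \<bullet> h) *\<^sub>R A - (b \<bullet> h) *\<^sub>R B)"
  define M2 :: "'a \<Rightarrow>\<^sub>L 'a \<Rightarrow>\<^sub>L real" where "M2 = Blinfun (\<lambda>h. (b \<bullet> h) *\<^sub>R A + (a \<bullet> h) *\<^sub>R B)"
  have M1: "blinfun_apply M1 h = (a \<bullet> h) *\<^sub>R A - (b \<bullet> h) *\<^sub>R B" for h
    unfolding M1_def by (subst bounded_linear_Blinfun_apply) (auto intro!: bounded_linear_intros)
  have M2: "blinfun_apply M2 h = (b \<bullet> h) *\<^sub>R A + (a \<bullet> h) *\<^sub>R B" for h
    unfolding M2_def by (subst bounded_linear_Blinfun_apply) (auto intro!: bounded_linear_intros)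
  show "blinfun_apply (Re c *\<^sub>R A - Im c *\<^sub>R B) h = Re (c * Z h)" for c h
    by (simp add: A_def B_def Z blinfun.diff_left blinfun.scaleR_left)
  show "blinfun_apply (blinfun_apply (Re c *\<^sub>R M1 - Im c *\<^sub>R M2) h) k = Re (c * (Z h * Z k))" for c h k
    by (simp add: M1 M2 A_def B_def Z blinfun.diff_left blinfun.scaleR_left blinfun.add_left
        algebra_simps)
  show "bounded_linear (\<lambda>c. Re c *\<^sub>R A - Im c *\<^sub>R B)"
    by (intro bounded_linear_intros bounded_linear_Re bounded_linear_Im)
  show "bounded_linear (\<lambda>c. Re c *\<^sub>R M1 - Im c *\<^sub>R M2)"
    by (intro bounded_linear_intros bounded_linear_Re bounded_linear_Im)
qed

text \<open>Writing \<open>Z x = a \<bullet> x + \<i> (b \<bullet> x)\<close>, the Hessian of \<open>Re (p (Z x))\<close> is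
  \<open>(h, k) \<mapsto> Re (p'' (Z x) Z h Z k)\<close>; its trace is \<open>Re (p'' (Z x) \<Sum>\<^sub>i (Z e\<^sub>i)\<^sup>2)\<close>,
  which vanishes because \<open>Z\<close> is isotropic.\<close>
lemma harmonic_Re_poly_inner:
  fixes a b :: "real^'n" and p :: "complex poly"
  assumes "a \<bullet> b = 0" "norm a = norm b"
  shows "harmonic (\<lambda>x. Re (poly p (of_real (a \<bullet> x) + \<i> * of_real (b \<bullet> x))))"
proof -
  define Z where "Z x = of_real (a \<bullet> x) + \<i> * of_real (b \<bullet> x)" for x :: "real^'n"
  obtain L Q where L: "\<And>c h. blinfun_apply (L c) h = Re (c * Z h)"
    and Q: "\<And>c h k. blinfun_apply (blinfun_apply (Q c) h) k = Re (c * (Z h * Z k))"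
    and "bounded_linear L" "bounded_linear Q"
    using exists_blinfun_Re_mult[OF Z_def] by blast
  have "bounded_linear (\<lambda>x. complex_of_real (c \<bullet> x))" for c :: "real^'n"
    by (rule bounded_linear_compose[OF bounded_linear_of_real bounded_linear_inner_right])
  then have "bounded_linear Z"
    unfolding Z_def by (intro bounded_linear_add bounded_linear_compose[OF bounded_linear_mult_right])
  then have cZ: "continuous_on UNIV Z" and d_poly: "((\<lambda>x. poly q (Z x)) has_derivative
      (\<lambda>h. poly (pderiv q) (Z x) * Z h)) (at x)" for q x
    by (simp_all add: linear_continuous_on has_derivative_poly_linear)
  define u' where "u' x = L (poly (pderiv p) (Z x))" for x
  define u'' where "u'' x = Q (poly (pderiv (pderiv p)) (Z x))" for x
  show ?thesis
    unfolding harmonic_def Z_def[symmetric]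
  proof (intro exI[of _ u'] exI[of _ u''] conjI allI)
    fix x
    show "((\<lambda>x. Re (poly p (Z x))) has_derivative blinfun_apply (u' x)) (at x)"
      using has_derivative_Re[OF d_poly[of p x]] by (simp add: u'_def L[abs_def])
    have "(u' has_derivative (\<lambda>h. L (poly (pderiv (pderiv p)) (Z x) * Z h))) (at x)"
      unfolding u'_def by (rule bounded_linear.has_derivative[OF \<open>bounded_linear L\<close> d_poly])
    moreover have "(\<lambda>h. L (poly (pderiv (pderiv p)) (Z x) * Z h)) = blinfun_apply (u'' x)"
      by (intro ext blinfun_eqI) (simp add: u''_def L Q ac_simps)
    ultimately show "(u' has_derivative blinfun_apply (u'' x)) (at x)" by simp
    have "(\<Sum>i\<in>UNIV. blinfun_apply (blinfun_apply (u'' x) (axis i 1)) (axis i 1))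
        = Re (poly (pderiv (pderiv p)) (Z x) * (\<Sum>i\<in>UNIV. (Z (axis i 1))\<^sup>2))"
      by (simp only: u''_def Q power2_eq_square sum_distrib_left Re_sum)
    moreover have "Z (axis i 1) = of_real (a $ i) + \<i> * of_real (b $ i)" for i
      by (simp add: Z_def inner_axis)
    ultimately show "(\<Sum>i\<in>UNIV. blinfun_apply (blinfun_apply (u'' x) (axis i 1)) (axis i 1)) = 0"
      using isotropic_sum_square_eq_0[OF assms] by simp
  next
    show "continuous_on UNIV u''"
      unfolding u''_def
      by (rule bounded_linear.continuous_on[OF \<open>bounded_linear Q\<close>]) (intro continuous_intros cZ)
  qed
qed

section \<open>Lebesgue measure\<close>

lemma continuous_imp_borel_measurable_lebesgue:
  "continuous_on UNIV f \<Longrightarrow> f \<in> borel_measurable lebesgue"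
  by (intro measurable_completion) (simp add: borel_measurable_continuous_onI)

lemma measure_decseq_tendsto_0:
  assumes "decseq A" "\<And>k. A k \<in> lmeasurable" "negligible (\<Inter>k. A k)"
  shows "(\<lambda>k. measure lebesgue (A k)) \<longlonglongrightarrow> 0"
proof -
  have "(\<lambda>k. measure lebesgue (A k)) \<longlonglongrightarrow> measure lebesgue (\<Inter>k. A k)"
    using assms(1,2) fmeasurableD2[OF assms(2)] by (intro Lim_measure_decseq) auto
  then show ?thesis using negligible_imp_measure0[OF assms(3)] by simp
qed

lemma lmeasurable_restrict_Collect:
  assumes "S \<in> lmeasurable" "{x\<in>space lebesgue. P x} \<in> sets lebesgue"
  shows "{x\<in>S. P x} \<in> lmeasurable"
proof (rule fmeasurableI2[OF assms(1)])
  have "{x\<in>S. P x} = S \<inter> {x\<in>space lebesgue. P x}" by auto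
  then show "{x\<in>S. P x} \<in> sets lebesgue"
    by (simp only:) (rule sets.Int[OF fmeasurableD[OF assms(1)] assms(2)])
qed auto

lemma ae_tendsto_imp_tendsto_in_measure:
  fixes g :: "nat \<Rightarrow> 'a::euclidean_space \<Rightarrow> real"
  assumes S: "S \<in> lmeasurable" and "negligible N" and lim: "\<And>x. x \<notin> N \<Longrightarrow> (\<lambda>n. g n x) \<longlonglongrightarrow> v x"
    and [measurable]: "\<And>n. g n \<in> borel_measurable lebesgue" "v \<in> borel_measurable lebesgue"
    and "e > 0"
  shows "(\<lambda>n. measure lebesgue {x\<in>S. e \<le> \<bar>g n x - v x\<bar>}) \<longlonglongrightarrow> 0"
proof -
  define E where "E k = {x\<in>S. \<exists>n\<ge>k. e \<le> \<bar>g n x - v x\<bar>}" for k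
  have E: "E k \<in> lmeasurable" for k
    unfolding E_def by (rule lmeasurable_restrict_Collect[OF S]) measurable
  have "decseq E" unfolding decseq_def E_def by (auto intro: le_trans)
  have "(\<Inter>k. E k) \<subseteq> N"
  proof
    fix x assume x: "x \<in> (\<Inter>k. E k)"
    show "x \<in> N"
    proof (rule ccontr)
      assume "x \<notin> N"
      then obtain k where "\<forall>n\<ge>k. \<bar>g n x - v x\<bar> < e"
        using LIMSEQ_D[OF lim \<open>e > 0\<close>] by auto
      moreover have "x \<in> E k" using x by blast
      ultimately show False unfolding E_def by force
    qed
  qed
  then have "negligible (\<Inter>k. E k)" using \<open>negligible N\<close> negligible_subset by blast
  then have E_small: "(\<lambda>k. measure lebesgue (E k)) \<longlonglongrightarrow> 0"
    using \<open>decseq E\<close> E by (intro measure_decseq_tendsto_0)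
  have "{x\<in>S. e \<le> \<bar>g n x - v x\<bar>} \<in> lmeasurable" for n
    by (rule lmeasurable_restrict_Collect[OF S]) measurable
  then have "measure lebesgue {x\<in>S. e \<le> \<bar>g n x - v x\<bar>} \<le> measure lebesgue (E n)" for n
    by (intro measure_mono_fmeasurable[OF _ fmeasurableD E]) (auto simp: E_def)
  then show ?thesis
    by (intro tendsto_sandwich[OF always_eventually always_eventually tendsto_const E_small]) simp_all
qed

lemma measure_deviation_le:
  fixes f v :: "'a::euclidean_space \<Rightarrow> real"
  assumes "K \<in> lmeasurable" "K \<subseteq> S" "T \<in> lmeasurable"
    and "\<And>x. x \<in> S - T \<Longrightarrow> \<bar>f x - v x\<bar> < d" "d \<le> e"
    and [measurable]: "f \<in> borel_measurable lebesgue" "v \<in> borel_measurable lebesgue"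
  shows "measure lebesgue {x\<in>K. \<bar>f x - v x\<bar> > e} \<le> measure lebesgue T"
proof -
  have "{x\<in>K. \<bar>f x - v x\<bar> > e} \<subseteq> T"
  proof
    fix x assume x: "x \<in> {x\<in>K. \<bar>f x - v x\<bar> > e}"
    show "x \<in> T"
    proof (rule ccontr)
      assume "x \<notin> T"
      then have "\<bar>f x - v x\<bar> < d" using assms(2,4) x by blast
      moreover have "e < \<bar>f x - v x\<bar>" using x by simp
      ultimately show False using \<open>d \<le> e\<close> by linarith
    qed
  qed
  moreover have "{x\<in>K. \<bar>f x - v x\<bar> > e} \<in> lmeasurable"
    by (rule lmeasurable_restrict_Collect[OF assms(1)]) measurable
  ultimately show ?thesis by (rule measure_mono_fmeasurable[OF _ fmeasurableD assms(3)])
qed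

lemma abs_inner_le_on_cball:
  assumes "x \<in> cball 0 r"
  shows "\<bar>a \<bullet> x\<bar> \<le> norm a * \<bar>r\<bar>"
proof -
  have "norm x \<le> \<bar>r\<bar>" using assms by (simp add: mem_cball_0)
  then show ?thesis
    using Cauchy_Schwarz_ineq2[of a x] by (meson mult_left_mono norm_ge_zero order_trans)
qed

lemma lmeasurable_slab:
  fixes a :: "'a::euclidean_space"
  shows "{x\<in>cball 0 r. \<bar>a \<bullet> x - t\<bar> \<le> d} \<in> lmeasurable"
proof (rule lmeasurable_compact)
  have "closed {x. \<bar>a \<bullet> x - t\<bar> \<le> d}" by (intro closed_Collect_le continuous_intros)
  then have "compact (cball 0 r \<inter> {x. \<bar>a \<bullet> x - t\<bar> \<le> d})" by (simp add: compact_Int_closed)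
  moreover have "cball 0 r \<inter> {x. \<bar>a \<bullet> x - t\<bar> \<le> d} = {x\<in>cball 0 r. \<bar>a \<bullet> x - t\<bar> \<le> d}" by blast
  ultimately show "compact {x\<in>cball 0 r. \<bar>a \<bullet> x - t\<bar> \<le> d}" by (simp only:)
qed

lemma measure_slab_small:
  fixes a :: "'a::euclidean_space"
  assumes "a \<noteq> 0" "e > 0"
  shows "\<exists>\<delta>>0. measure lebesgue {x\<in>cball 0 r. \<bar>a \<bullet> x - t\<bar> \<le> \<delta>} < e"
proof -
  define A where "A k = {x\<in>cball 0 r. \<bar>a \<bullet> x - t\<bar> \<le> 1 / Suc k}" for k :: nat
  have "decseq A"
  proof (rule decseq_SucI)
    fix k
    have "1 / real (Suc (Suc k)) \<le> 1 / real (Suc k)" by (simp add: frac_le)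
    then show "A (Suc k) \<subseteq> A k" unfolding A_def by auto
  qed
  have "(\<Inter>k. A k) \<subseteq> {x. a \<bullet> x = t}"
  proof
    fix x assume x: "x \<in> (\<Inter>k. A k)"
    show "x \<in> {x. a \<bullet> x = t}"
    proof (rule ccontr)
      assume "x \<notin> {x. a \<bullet> x = t}"
      then obtain k where "inverse (real (Suc k)) < \<bar>a \<bullet> x - t\<bar>"
        using reals_Archimedean[of "\<bar>a \<bullet> x - t\<bar>"] by auto
      moreover have "x \<in> A k" using x by blast
      ultimately show False by (simp add: A_def inverse_eq_divide)
    qed
  qed
  then have "negligible (\<Inter>k. A k)"
    using negligible_hyperplane[of a t] assms(1) negligible_subset by blast
  moreover have "A k \<in> lmeasurable" for k unfolding A_def by (rule lmeasurable_slab)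
  ultimately have "(\<lambda>k. measure lebesgue (A k)) \<longlonglongrightarrow> 0"
    using \<open>decseq A\<close> by (intro measure_decseq_tendsto_0)
  then obtain k where "measure lebesgue (A k) < e"
    using LIMSEQ_D[OF _ assms(2)] by fastforce
  then show ?thesis unfolding A_def by (intro exI[of _ "1 / Suc k"]) simp
qed

section \<open>Harmonic approximation in measure\<close>

definition approximable_in_measure ::
    "('a::euclidean_space \<Rightarrow> real) set \<Rightarrow> 'a set \<Rightarrow> ('a \<Rightarrow> real) \<Rightarrow> bool" where
  "approximable_in_measure H S f \<longleftrightarrow>
     (\<forall>e>0. \<exists>h\<in>H. \<exists>T\<in>lmeasurable. measure lebesgue T \<le> e \<and> (\<forall>x\<in>S - T. \<bar>h x - f x\<bar> < e))"

lemma approximable_in_measure_uniform: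
  assumes "\<And>e. e > 0 \<Longrightarrow> \<exists>h\<in>H. \<forall>x\<in>S. \<bar>h x - f x\<bar> < e"
  shows "approximable_in_measure H S f"
  unfolding approximable_in_measure_def
proof (intro allI impI)
  fix e :: real assume "e > 0"
  then obtain h where "h \<in> H" "\<forall>x\<in>S. \<bar>h x - f x\<bar> < e" using assms by blast
  then show "\<exists>h\<in>H. \<exists>T\<in>lmeasurable. measure lebesgue T \<le> e \<and> (\<forall>x\<in>S - T. \<bar>h x - f x\<bar> < e)"
    using \<open>e > 0\<close> by (intro bexI[of _ h] bexI[of _ "{}"]) auto
qed

lemma approximable_in_measure_trans:
  assumes "approximable_in_measure G S f" "\<And>g. g \<in> G \<Longrightarrow> approximable_in_measure H S g"
  shows "approximable_in_measure H S f"
  unfolding approximable_in_measure_def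
proof (intro allI impI)
  fix e :: real assume "e > 0"
  then obtain g T1 where g: "g \<in> G" "T1 \<in> lmeasurable" "measure lebesgue T1 \<le> e/2"
      "\<forall>x\<in>S - T1. \<bar>g x - f x\<bar> < e/2"
    using assms(1) unfolding approximable_in_measure_def by (meson half_gt_zero)
  obtain h T2 where h: "h \<in> H" "T2 \<in> lmeasurable" "measure lebesgue T2 \<le> e/2"
      "\<forall>x\<in>S - T2. \<bar>h x - g x\<bar> < e/2"
    using assms(2)[OF g(1)] \<open>e > 0\<close> unfolding approximable_in_measure_def by (meson half_gt_zero)
  have "measure lebesgue (T1 \<union> T2) \<le> e"
    using measure_Un_le[of T1 lebesgue T2] g(2,3) h(2,3) by (auto dest: fmeasurableD)
  moreover have "\<bar>h x - f x\<bar> < e" if "x \<in> S - (T1 \<union> T2)" for x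
  proof -
    have "\<bar>g x - f x\<bar> < e/2" "\<bar>h x - g x\<bar> < e/2" using g(4) h(4) that by auto
    then show ?thesis by arith
  qed
  ultimately show "\<exists>h\<in>H. \<exists>T\<in>lmeasurable. measure lebesgue T \<le> e \<and> (\<forall>x\<in>S - T. \<bar>h x - f x\<bar> < e)"
    using g(2) h(1,2) by (intro bexI[of _ h] bexI[of _ "T1 \<union> T2"]) auto
qed

lemma approximable_harmonic_const: "approximable_in_measure {h. harmonic h} S (\<lambda>x. c)"
proof (rule approximable_in_measure_uniform)
  fix e :: real assume "e > 0"
  then show "\<exists>h\<in>{h. harmonic h}. \<forall>x\<in>S. \<bar>h x - c\<bar> < e"
    using harmonic_const[of c] by (intro bexI[of _ "\<lambda>x. c"]) auto
qed

lemma approximable_harmonic_add: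
  assumes "approximable_in_measure {h. harmonic h} S f" "approximable_in_measure {h. harmonic h} S g"
  shows "approximable_in_measure {h. harmonic h} S (\<lambda>x. f x + g x)"
  unfolding approximable_in_measure_def
proof (intro allI impI)
  fix e :: real assume "e > 0"
  then obtain h1 T1 where 1: "harmonic h1" "T1 \<in> lmeasurable" "measure lebesgue T1 \<le> e/2"
      "\<forall>x\<in>S - T1. \<bar>h1 x - f x\<bar> < e/2"
    using assms(1) unfolding approximable_in_measure_def by (metis half_gt_zero mem_Collect_eq)
  obtain h2 T2 where 2: "harmonic h2" "T2 \<in> lmeasurable" "measure lebesgue T2 \<le> e/2"
      "\<forall>x\<in>S - T2. \<bar>h2 x - g x\<bar> < e/2"
    using assms(2) \<open>e > 0\<close> unfolding approximable_in_measure_def by (metis half_gt_zero mem_Collect_eq)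
  have "measure lebesgue (T1 \<union> T2) \<le> e"
    using measure_Un_le[of T1 lebesgue T2] 1(2,3) 2(2,3) by (auto dest: fmeasurableD)
  moreover have "\<bar>h1 x + h2 x - (f x + g x)\<bar> < e" if "x \<in> S - (T1 \<union> T2)" for x
  proof -
    have "\<bar>h1 x - f x\<bar> < e/2" "\<bar>h2 x - g x\<bar> < e/2" using 1(4) 2(4) that by auto
    then show ?thesis by arith
  qed
  ultimately show "\<exists>h\<in>{h. harmonic h}. \<exists>T\<in>lmeasurable. measure lebesgue T \<le> e \<and>
      (\<forall>x\<in>S - T. \<bar>h x - (f x + g x)\<bar> < e)"
    using 1(1,2) 2(1,2) harmonic_add
    by (intro bexI[of _ "\<lambda>x. h1 x + h2 x"] bexI[of _ "T1 \<union> T2"]) auto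
qed

lemma approximable_harmonic_cmult:
  assumes "approximable_in_measure {h. harmonic h} S f"
  shows "approximable_in_measure {h. harmonic h} S (\<lambda>x. c * f x)"
  unfolding approximable_in_measure_def
proof (intro allI impI)
  fix e :: real assume "e > 0"
  define d where "d = e / (\<bar>c\<bar> + 1)"
  have "0 < d" "d \<le> e" "\<bar>c\<bar> * d < e"
    using \<open>e > 0\<close> by (auto simp: d_def field_simps)
  then obtain h T where "harmonic h" "T \<in> lmeasurable" "measure lebesgue T \<le> d"
      and close: "\<forall>x\<in>S - T. \<bar>h x - f x\<bar> < d"
    using assms unfolding approximable_in_measure_def by (metis mem_Collect_eq)
  moreover have "\<bar>c * h x - c * f x\<bar> < e" if "x \<in> S - T" for x
  proof -
    have "\<bar>c * h x - c * f x\<bar> = \<bar>c\<bar> * \<bar>h x - f x\<bar>" by (simp add: abs_mult[symmetric] algebra_simps)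
    also have "\<dots> \<le> \<bar>c\<bar> * d" using close that by (intro mult_left_mono) (auto intro: less_imp_le)
    finally show ?thesis using \<open>\<bar>c\<bar> * d < e\<close> by linarith
  qed
  ultimately show "\<exists>h\<in>{h. harmonic h}. \<exists>T\<in>lmeasurable. measure lebesgue T \<le> e \<and>
      (\<forall>x\<in>S - T. \<bar>h x - c * f x\<bar> < e)"
    using \<open>d \<le> e\<close> harmonic_cmult by (intro bexI[of _ "\<lambda>x. c * h x"] bexI[of _ T]) auto
qed

lemma approximable_harmonic_sum:
  assumes "\<And>i. i \<in> I \<Longrightarrow> approximable_in_measure {h. harmonic h} S (f i)"
  shows "approximable_in_measure {h. harmonic h} S (\<lambda>x. \<Sum>i\<in>I. f i x)"
  using assms
proof (induction I rule: infinite_finite_induct)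
  case (insert i I)
  then show ?case using approximable_harmonic_add[of S "f i" "\<lambda>x. \<Sum>i\<in>I. f i x"] by simp
qed (simp_all add: approximable_harmonic_const)

text \<open>A Lebesgue measurable function is an almost everywhere limit of continuous functions.\<close>
lemma approximable_in_measure_continuous:
  fixes v :: "'a::euclidean_space \<Rightarrow> real"
  assumes v: "v \<in> borel_measurable lebesgue" and S: "S \<in> lmeasurable"
  shows "approximable_in_measure {g. continuous_on UNIV g} S v"
  unfolding approximable_in_measure_def
proof (intro allI impI)
  fix e :: real assume "e > 0"
  obtain N g where "negligible N" and g: "\<And>n. continuous_on UNIV (g n)"
    and lim: "\<And>x. x \<notin> N \<Longrightarrow> (\<lambda>n. g n x) \<longlonglongrightarrow> v x"
    using lebesgue_measurable_imp_measurable_on[OF v, of UNIV] unfolding measurable_on_def by force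
  have [measurable]: "g n \<in> borel_measurable lebesgue" for n
    using g by (rule continuous_imp_borel_measurable_lebesgue)
  have [measurable]: "v \<in> borel_measurable lebesgue" by (rule v)
  have "(\<lambda>n. measure lebesgue {x\<in>S. e \<le> \<bar>g n x - v x\<bar>}) \<longlonglongrightarrow> 0"
    using ae_tendsto_imp_tendsto_in_measure[OF S \<open>negligible N\<close> lim _ v \<open>e > 0\<close>] by simp
  then obtain n where "measure lebesgue {x\<in>S. e \<le> \<bar>g n x - v x\<bar>} < e"
    using LIMSEQ_D[OF _ \<open>e > 0\<close>] by fastforce
  moreover have "{x\<in>S. e \<le> \<bar>g n x - v x\<bar>} \<in> lmeasurable"
    by (rule lmeasurable_restrict_Collect[OF S]) measurable
  ultimately show "\<exists>h\<in>{g. continuous_on UNIV g}. \<exists>T\<in>lmeasurable. measure lebesgue T \<le> e \<and>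
      (\<forall>x\<in>S - T. \<bar>h x - v x\<bar> < e)"
    using g by (intro bexI[of _ "g n"] bexI[of _ "{x\<in>S. e \<le> \<bar>g n x - v x\<bar>}"]) auto
qed

lemma exists_orthogonal_same_norm:
  fixes a :: "'a::euclidean_space"
  assumes "2 \<le> DIM('a)"
  obtains b where "a \<bullet> b = 0" "norm b = norm a"
proof -
  obtain y where "y \<noteq> 0" "orthogonal a y" using orthogonal_to_vector_exists[OF assms] by blast
  then show ?thesis by (intro that[of "(norm a / norm y) *\<^sub>R y"]) (auto simp: orthogonal_def)
qed

lemma approximable_harmonic_heaviside:
  fixes a :: "real^'n"
  assumes "CARD('n) \<ge> 2" "a \<noteq> 0"
  shows "approximable_in_measure {h. harmonic h} (cball 0 r) (\<lambda>x. if t \<le> a \<bullet> x then 1 else 0)"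
  unfolding approximable_in_measure_def
proof (intro allI impI)
  fix e :: real assume "e > 0"
  obtain b where b: "a \<bullet> b = 0" "norm b = norm a"
    using exists_orthogonal_same_norm[of a] assms(1) by auto
  obtain \<delta> where "\<delta> > 0" and slab: "measure lebesgue {x\<in>cball 0 r. \<bar>a \<bullet> x - t\<bar> \<le> \<delta>} < e"
    using measure_slab_small[OF assms(2) \<open>e > 0\<close>] by blast
  define R where "R = norm a * \<bar>r\<bar>"
  obtain q where q: "\<forall>z\<in>{z. cmod z \<le> 2 * R \<and> \<delta> \<le> \<bar>Re z - t\<bar>}.
      cmod ((if t \<le> Re z then 1 else 0) - poly q z) < e"
    using poly_approximable_heaviside[OF \<open>\<delta> > 0\<close>, of "2 * R" t] \<open>e > 0\<close>
    unfolding poly_approximable_def by blast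
  define h where "h x = Re (poly q (of_real (a \<bullet> x) + \<i> * of_real (b \<bullet> x)))" for x
  have "\<bar>h x - (if t \<le> a \<bullet> x then 1 else 0)\<bar> < e"
    if x: "x \<in> cball 0 r - {x\<in>cball 0 r. \<bar>a \<bullet> x - t\<bar> \<le> \<delta>}" for x
  proof -
    define z where "z = complex_of_real (a \<bullet> x) + \<i> * of_real (b \<bullet> x)"
    have "\<bar>Re z\<bar> \<le> R" "\<bar>Im z\<bar> \<le> R"
      using abs_inner_le_on_cball[of x r a] abs_inner_le_on_cball[of x r b] x b(2)
      by (auto simp: z_def R_def)
    then have "cmod z \<le> 2 * R" using cmod_le[of z] by linarith
    moreover have "\<delta> \<le> \<bar>Re z - t\<bar>" using x by (auto simp: z_def)
    ultimately have "cmod ((if t \<le> Re z then 1 else 0) - poly q z) < e" using q by blast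
    moreover have "\<bar>h x - (if t \<le> a \<bullet> x then 1 else 0)\<bar>
        = \<bar>Re ((if t \<le> Re z then 1 else 0) - poly q z)\<bar>"
      by (cases "t \<le> a \<bullet> x") (simp_all add: h_def z_def abs_minus_commute)
    ultimately show ?thesis
      using abs_Re_le_cmod[of "(if t \<le> Re z then 1 else 0) - poly q z"] by linarith
  qed
  then show "\<exists>h\<in>{h. harmonic h}. \<exists>T\<in>lmeasurable. measure lebesgue T \<le> e \<and>
      (\<forall>x\<in>cball 0 r - T. \<bar>h x - (if t \<le> a \<bullet> x then 1 else 0)\<bar> < e)"
    using harmonic_Re_poly_inner[OF b(1) b(2)[symmetric], of q] lmeasurable_slab slab
    by (intro bexI[of _ h] bexI[of _ "{x\<in>cball 0 r. \<bar>a \<bullet> x - t\<bar> \<le> \<delta>}"])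
      (auto simp: h_def[abs_def])
qed

lemma sum_telescope_lessThan_indicator:
  fixes f :: "nat \<Rightarrow> 'a::comm_ring_1"
  assumes "k \<le> m"
  shows "(\<Sum>j<m. (f (Suc j) - f j) * (if j < k then 1 else 0)) = f k - f 0"
proof -
  have "(\<Sum>j<m. (f (Suc j) - f j) * (if j < k then 1 else 0)) = (\<Sum>j<m. if j < k then f (Suc j) - f j else 0)"
    by (intro sum.cong) auto
  also have "\<dots> = (\<Sum>j\<in>{j\<in>{..<m}. j < k}. f (Suc j) - f j)"
    by (rule sum.inter_filter[symmetric]) simp
  also have "{j\<in>{..<m}. j < k} = {..<k}" using assms by auto
  finally show ?thesis by (simp add: sum_lessThan_telescope)
qed

lemma lipschitz_step_approx:
  fixes g :: "real \<Rightarrow> real"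
  assumes "\<eta> > 0" "L-lipschitz_on UNIV g" "\<alpha> \<le> s" "s \<le> \<alpha> + real m * \<eta>"
  shows "\<bar>g \<alpha> + (\<Sum>j<m. (g (\<alpha> + real (Suc j) * \<eta>) - g (\<alpha> + real j * \<eta>)) *
            (if \<alpha> + real (Suc j) * \<eta> \<le> s then 1 else 0)) - g s\<bar> \<le> L * \<eta>"
proof -
  define f where "f j = g (\<alpha> + real j * \<eta>)" for j
  define k where "k = nat \<lfloor>(s - \<alpha>) / \<eta>\<rfloor>"
  have "0 \<le> (s - \<alpha>) / \<eta>" using assms(1,3) by simp
  then have k: "real k \<le> (s - \<alpha>) / \<eta>" "(s - \<alpha>) / \<eta> < real k + 1"
    unfolding k_def by (auto simp: of_nat_nat)
  have "(s - \<alpha>) / \<eta> \<le> real m" using assms(1,4) by (simp add: field_simps)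
  then have "k \<le> m" using k by linarith
  have step: "\<alpha> + real (Suc j) * \<eta> \<le> s \<longleftrightarrow> j < k" for j
  proof -
    have "\<alpha> + real (Suc j) * \<eta> \<le> s \<longleftrightarrow> real (Suc j) \<le> (s - \<alpha>) / \<eta>"
      using assms(1) by (simp add: field_simps)
    also have "\<dots> \<longleftrightarrow> j < k"
    proof (cases "j < k")
      case True
      then have "real (Suc j) \<le> real k" by simp
      with k True show ?thesis by auto
    next
      case False
      then have "real k + 1 \<le> real (Suc j)" by simp
      with k False show ?thesis by auto
    qed
    finally show ?thesis .
  qed
  have sum: "g \<alpha> + (\<Sum>j<m. (f (Suc j) - f j) * (if \<alpha> + real (Suc j) * \<eta> \<le> s then 1 else 0))
      = f k"
    unfolding step using sum_telescope_lessThan_indicator[OF \<open>k \<le> m\<close>, of f] by (simp add: f_def)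
  have "\<bar>f k - g s\<bar> \<le> L * \<bar>(\<alpha> + real k * \<eta>) - s\<bar>"
    using lipschitz_onD[OF assms(2)] by (simp add: f_def dist_real_def)
  also have "\<dots> \<le> L * \<eta>"
  proof (rule mult_left_mono)
    show "\<bar>(\<alpha> + real k * \<eta>) - s\<bar> \<le> \<eta>" using k assms(1) by (simp add: field_simps)
  qed (rule lipschitz_on_nonneg[OF assms(2)])
  finally show ?thesis using sum by (simp add: f_def)
qed

lemma approximable_harmonic_lipschitz_ridge:
  fixes a :: "real^'n"
  assumes "CARD('n) \<ge> 2" and lip: "L-lipschitz_on UNIV g"
  shows "approximable_in_measure {h. harmonic h} (cball 0 r) (\<lambda>x. g (a \<bullet> x))"
proof (cases "a = 0")
  case True
  then show ?thesis using approximable_harmonic_const[of "cball 0 r" "g 0"] by simp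
next
  case False
  let ?G = "{\<sigma>. approximable_in_measure {h. harmonic h} (cball 0 r) \<sigma>}"
  have "approximable_in_measure ?G (cball 0 r) (\<lambda>x. g (a \<bullet> x))"
  proof (rule approximable_in_measure_uniform)
    fix e :: real assume "e > 0"
    have "0 \<le> L" using lip by (rule lipschitz_on_nonneg)
    define \<eta> where "\<eta> = e / (L + 1)"
    have "\<eta> > 0" "L * \<eta> < e" using \<open>e > 0\<close> \<open>0 \<le> L\<close> by (auto simp: \<eta>_def field_simps)
    define R where "R = norm a * \<bar>r\<bar>"
    define m where "m = nat \<lceil>2 * R / \<eta>\<rceil>"
    have "2 * R \<le> real m * \<eta>"
      using \<open>\<eta> > 0\<close> real_nat_ceiling_ge[of "2 * R / \<eta>"] by (simp add: m_def field_simps)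
    define \<tau> where "\<tau> j = - R + real j * \<eta>" for j
    define \<sigma> where "\<sigma> x = g (- R) +
        (\<Sum>j<m. (g (\<tau> (Suc j)) - g (\<tau> j)) * (if \<tau> (Suc j) \<le> a \<bullet> x then 1 else 0))" for x
    have "\<sigma> \<in> ?G"
      unfolding \<sigma>_def
      by (intro CollectI approximable_harmonic_add approximable_harmonic_const
          approximable_harmonic_sum approximable_harmonic_cmult
          approximable_harmonic_heaviside[OF assms(1) False])
    moreover have "\<bar>\<sigma> x - g (a \<bullet> x)\<bar> < e" if "x \<in> cball 0 r" for x
    proof -
      have "\<bar>a \<bullet> x\<bar> \<le> R" using abs_inner_le_on_cball[OF that] by (simp add: R_def)
      then have "- R \<le> a \<bullet> x" "a \<bullet> x \<le> - R + real m * \<eta>" using \<open>2 * R \<le> real m * \<eta>\<close> by auto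
      then have "\<bar>\<sigma> x - g (a \<bullet> x)\<bar> \<le> L * \<eta>"
        unfolding \<sigma>_def \<tau>_def by (rule lipschitz_step_approx[OF \<open>\<eta> > 0\<close> lip])
      then show ?thesis using \<open>L * \<eta> < e\<close> by linarith
    qed
    ultimately show "\<exists>h\<in>?G. \<forall>x\<in>cball 0 r. \<bar>h x - g (a \<bullet> x)\<bar> < e" by blast
  qed
  then show ?thesis by (rule approximable_in_measure_trans) simp
qed

inductive trig_poly :: "('a::real_inner \<Rightarrow> real) \<Rightarrow> bool" where
  cos: "trig_poly (\<lambda>x. c * cos (a \<bullet> x + \<phi>))"
| add: "trig_poly f \<Longrightarrow> trig_poly g \<Longrightarrow> trig_poly (\<lambda>x. f x + g x)"

lemma trig_poly_const: "trig_poly (\<lambda>x. c)"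
proof -
  have "(\<lambda>x::'a. c * cos (0 \<bullet> x + 0)) = (\<lambda>x. c)" by simp
  then show ?thesis using trig_poly.cos[of c "0::'a" 0] by simp
qed

lemma trig_poly_mult_cos:
  assumes "trig_poly g"
  shows "trig_poly (\<lambda>x. c * cos (a \<bullet> x + \<phi>) * g x)"
  using assms
proof (induction rule: trig_poly.induct)
  case (cos d b \<psi>)
  have eq: "(\<lambda>x. c * cos (a \<bullet> x + \<phi>) * (d * cos (b \<bullet> x + \<psi>))) =
      (\<lambda>x. (c * d / 2) * cos ((a - b) \<bullet> x + (\<phi> - \<psi>)) + (c * d / 2) * cos ((a + b) \<bullet> x + (\<phi> + \<psi>)))"
    by (rule ext) (simp add: cos_times_cos inner_diff_left inner_add_left algebra_simps add_divide_distrib)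
  show ?case unfolding eq by (intro trig_poly.add trig_poly.cos)
next
  case (add f g)
  then show ?case by (simp add: distrib_left trig_poly.add)
qed

lemma trig_poly_mult:
  assumes "trig_poly f" "trig_poly g"
  shows "trig_poly (\<lambda>x. f x * g x)"
  using assms
proof (induction rule: trig_poly.induct)
  case (cos c a \<phi>)
  then show ?case by (rule trig_poly_mult_cos)
next
  case (add f1 f2)
  then show ?case by (simp add: distrib_right trig_poly.add)
qed

lemma continuous_on_trig_poly: "trig_poly f \<Longrightarrow> continuous_on S f"
  by (induction rule: trig_poly.induct) (auto intro!: continuous_intros)

lemma trig_poly_separating:
  fixes x y :: "'a::real_inner"
  assumes "x \<noteq> y"
  shows "\<exists>f. trig_poly f \<and> f x \<noteq> f y"
proof -
  define a where "a = (1 / (norm (x - y))\<^sup>2) *\<^sub>R (x - y)"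
  have "a \<bullet> x - a \<bullet> y = a \<bullet> (x - y)" by (simp add: inner_diff_right)
  also have "\<dots> = 1" using assms by (simp add: a_def power2_norm_eq_inner)
  finally have "a \<bullet> x - a \<bullet> y = 1" .
  then have "cos (a \<bullet> x - a \<bullet> y) \<noteq> cos (a \<bullet> y - a \<bullet> y)"
    using cos_double_less_one[of "1/2"] by simp
  then show ?thesis
  proof (intro exI conjI)
    show "trig_poly (\<lambda>w. 1 * cos (a \<bullet> w + - (a \<bullet> y)))" by (rule trig_poly.cos)
  qed simp
qed

lemma abs_cos_diff_le: "\<bar>cos x - cos y\<bar> \<le> \<bar>x - y\<bar>" for x y :: real
proof -
  have "\<bar>cos x - cos y\<bar> = 2 * \<bar>sin ((x + y) / 2)\<bar> * \<bar>sin ((y - x) / 2)\<bar>"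
    by (simp add: cos_diff_cos abs_mult)
  also have "\<dots> \<le> 2 * 1 * \<bar>(y - x) / 2\<bar>"
    by (intro mult_mono abs_sin_x_le_abs_x) auto
  finally show ?thesis by simp
qed

lemma approximable_harmonic_trig_poly:
  fixes f :: "real^'n \<Rightarrow> real"
  assumes "CARD('n) \<ge> 2" "trig_poly f"
  shows "approximable_in_measure {h. harmonic h} (cball 0 r) f"
  using assms(2)
proof (induction rule: trig_poly.induct)
  case (cos c a \<phi>)
  have "\<bar>c\<bar>-lipschitz_on UNIV (\<lambda>s. c * cos (s + \<phi>))"
  proof (rule lipschitz_onI)
    fix s s' :: real
    have "\<bar>c * cos (s + \<phi>) - c * cos (s' + \<phi>)\<bar> = \<bar>c\<bar> * \<bar>cos (s + \<phi>) - cos (s' + \<phi>)\<bar>"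
      by (simp add: abs_mult[symmetric] right_diff_distrib)
    also have "\<dots> \<le> \<bar>c\<bar> * \<bar>s - s'\<bar>"
      using abs_cos_diff_le[of "s + \<phi>" "s' + \<phi>"] by (simp add: mult_left_mono)
    finally show "dist (c * cos (s + \<phi>)) (c * cos (s' + \<phi>)) \<le> \<bar>c\<bar> * dist s s'"
      by (simp add: dist_real_def)
  qed simp
  from approximable_harmonic_lipschitz_ridge[OF assms(1) this] show ?case .
next
  case (add f g)
  show ?case by (rule approximable_harmonic_add[OF add.IH])
qed

lemma approximable_harmonic_continuous:
  fixes f :: "real^'n \<Rightarrow> real"
  assumes "CARD('n) \<ge> 2" "continuous_on (cball 0 r) f"
  shows "approximable_in_measure {h. harmonic h} (cball 0 r) f"
proof (rule approximable_in_measure_trans)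
  show "approximable_in_measure {g. trig_poly g} (cball 0 r) f"
  proof (rule approximable_in_measure_uniform)
    fix e :: real assume "e > 0"
    have "\<exists>g. trig_poly g \<and> (\<forall>x\<in>cball 0 r. \<bar>f x - g x\<bar> < e)"
      using assms(2) \<open>e > 0\<close> trig_poly_separating
      by (intro Stone_Weierstrass_HOL)
        (auto intro: trig_poly_const continuous_on_trig_poly trig_poly.add trig_poly_mult)
    then show "\<exists>g\<in>{g. trig_poly g}. \<forall>x\<in>cball 0 r. \<bar>g x - f x\<bar> < e"
      by (auto simp: abs_minus_commute)
  qed
qed (simp add: approximable_harmonic_trig_poly[OF assms(1)])

lemma approximable_harmonic_measurable:
  fixes v :: "real^'n \<Rightarrow> real"
  assumes "CARD('n) \<ge> 2" "v \<in> borel_measurable lebesgue"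
  shows "approximable_in_measure {h. harmonic h} (cball 0 r) v"
  using approximable_in_measure_continuous[OF assms(2) lmeasurable_cball]
  by (rule approximable_in_measure_trans)
    (auto intro: approximable_harmonic_continuous[OF assms(1)] continuous_on_subset)

section \<open>Translates of a universal function\<close>

lemma approximable_by_translates:
  assumes "universal_uniform u" "harmonic h"
  shows "approximable_in_measure (range (\<lambda>a x. u (x + a))) (cball 0 r) h"
proof (rule approximable_in_measure_uniform)
  fix e :: real assume "e > 0"
  then obtain a where "\<forall>x\<in>cball 0 r. \<bar>u (x + a) - h x\<bar> < e"
    using assms unfolding universal_uniform_def by (meson compact_cball)
  then show "\<exists>f\<in>range (\<lambda>a x. u (x + a)). \<forall>x\<in>cball 0 r. \<bar>f x - h x\<bar> < e"
    by (intro bexI[of _ "\<lambda>x. u (x + a)"]) auto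
qed

lemma approximable_in_measure_on_balls_sequence:
  fixes v :: "'a::euclidean_space \<Rightarrow> real" and \<Phi> :: "'p \<Rightarrow> 'a \<Rightarrow> real"
  assumes "\<And>r. approximable_in_measure (range \<Phi>) (cball 0 r) v"
  shows "\<exists>a T. \<forall>j. T j \<in> lmeasurable \<and> measure lebesgue (T j) \<le> inverse (real (Suc j)) \<and>
    (\<forall>x\<in>cball 0 (real j) - T j. \<bar>\<Phi> (a j) x - v x\<bar> < inverse (real (Suc j)))"
proof -
  have "\<forall>j. \<exists>p T. T \<in> lmeasurable \<and> measure lebesgue T \<le> inverse (real (Suc j)) \<and>
      (\<forall>x\<in>cball 0 (real j) - T. \<bar>\<Phi> p x - v x\<bar> < inverse (real (Suc j)))"
  proof
    fix j :: nat
    have "inverse (real (Suc j)) > 0" by simp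
    then show "\<exists>p T. T \<in> lmeasurable \<and> measure lebesgue T \<le> inverse (real (Suc j)) \<and>
        (\<forall>x\<in>cball 0 (real j) - T. \<bar>\<Phi> p x - v x\<bar> < inverse (real (Suc j)))"
      using assms[of "real j"] unfolding approximable_in_measure_def by blast
  qed
  from choice[OF this] obtain a where "\<forall>j. \<exists>T. T \<in> lmeasurable \<and>
      measure lebesgue T \<le> inverse (real (Suc j)) \<and>
      (\<forall>x\<in>cball 0 (real j) - T. \<bar>\<Phi> (a j) x - v x\<bar> < inverse (real (Suc j)))" by blast
  from choice[OF this] show ?thesis by blast
qed

lemma convergence_in_measure_if_approximable:
  fixes v :: "'a::euclidean_space \<Rightarrow> real" and \<Phi> :: "'p \<Rightarrow> 'a \<Rightarrow> real"
  assumes approx: "\<And>r. approximable_in_measure (range \<Phi>) (cball 0 r) v"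
    and meas: "\<And>p. \<Phi> p \<in> borel_measurable lebesgue" and v: "v \<in> borel_measurable lebesgue"
  shows "\<exists>a. \<forall>K. compact K \<longrightarrow>
    (\<forall>e>0. (\<lambda>j. measure lebesgue {x\<in>K. \<bar>\<Phi> (a j) x - v x\<bar> > e}) \<longlonglongrightarrow> 0)"
proof -
  obtain a T where T: "\<And>j. T j \<in> lmeasurable" "\<And>j. measure lebesgue (T j) \<le> inverse (real (Suc j))"
    and close: "\<And>j x. x \<in> cball 0 (real j) - T j \<Longrightarrow> \<bar>\<Phi> (a j) x - v x\<bar> < inverse (real (Suc j))"
    using approximable_in_measure_on_balls_sequence[OF approx] by blast
  have "(\<lambda>j. measure lebesgue {x\<in>K. \<bar>\<Phi> (a j) x - v x\<bar> > e}) \<longlonglongrightarrow> 0"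
    if K: "compact K" and "e > 0" for K e
  proof -
    obtain B where B: "\<forall>x\<in>K. norm x \<le> B" using compact_imp_bounded[OF K] bounded_iff by blast
    obtain M1 :: nat where "B \<le> real M1" using real_arch_simple by blast
    obtain M2 :: nat where "inverse (real (Suc M2)) < e" using reals_Archimedean \<open>e > 0\<close> by blast
    have "measure lebesgue {x\<in>K. \<bar>\<Phi> (a j) x - v x\<bar> > e} \<le> inverse (real (Suc j))"
      if "max M1 M2 \<le> j" for j
    proof -
      have "K \<subseteq> cball 0 (real j)"
        using B \<open>B \<le> real M1\<close> that by (force simp: mem_cball_0)
      moreover have "inverse (real (Suc j)) \<le> inverse (real (Suc M2))"
        using that by (simp add: le_imp_inverse_le)
      then have "inverse (real (Suc j)) \<le> e" using \<open>inverse (real (Suc M2)) < e\<close> by linarith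
      ultimately have "measure lebesgue {x\<in>K. \<bar>\<Phi> (a j) x - v x\<bar> > e} \<le> measure lebesgue (T j)"
        using measure_deviation_le[OF lmeasurable_compact[OF K] _ T(1) close[where j = j] _ meas v]
        by blast
      then show ?thesis using T(2)[of j] by linarith
    qed
    then have "\<forall>\<^sub>F j in sequentially.
        measure lebesgue {x\<in>K. \<bar>\<Phi> (a j) x - v x\<bar> > e} \<le> inverse (real (Suc j))"
      unfolding eventually_sequentially by blast
    then show ?thesis
      by (intro tendsto_sandwich[OF _ _ tendsto_const LIMSEQ_inverse_real_of_nat]) auto
  qed
  then show ?thesis by blast
qed

theorem mainTheorem4:
  fixes u :: "real^'n \<Rightarrow> real"
  assumes "CARD('n) \<ge> 2"
    and "harmonic u"
    and "universal_uniform u"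
  shows "\<forall>v :: real^'n \<Rightarrow> real. v \<in> borel_measurable lebesgue \<longrightarrow>
           (\<exists>a :: nat \<Rightarrow> real^'n. \<forall>K. compact K \<longrightarrow> (\<forall>e>0.
              ((\<lambda>j. measure lebesgue {x\<in>K. \<bar>u (x + a j) - v x\<bar> > e}) \<longlonglongrightarrow> 0)))"
proof (intro allI impI)
  fix v :: "real^'n \<Rightarrow> real"
  assume v: "v \<in> borel_measurable lebesgue"
  have approx: "approximable_in_measure (range (\<lambda>a x. u (x + a))) (cball 0 r) v" for r
    using approximable_harmonic_measurable[OF assms(1) v]
    by (rule approximable_in_measure_trans) (simp add: approximable_by_translates[OF assms(3)])
  have meas: "(\<lambda>x. u (x + a)) \<in> borel_measurable lebesgue" for a
    by (rule continuous_imp_borel_measurable_lebesgue,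
        rule continuous_on_compose2[OF harmonic_continuous[OF assms(2)]]) (auto intro: continuous_intros)
  show "\<exists>a. \<forall>K. compact K \<longrightarrow> (\<forall>e>0.
      (\<lambda>j. measure lebesgue {x\<in>K. \<bar>u (x + a j) - v x\<bar> > e}) \<longlonglongrightarrow> 0)"
    using convergence_in_measure_if_approximable[OF approx meas v] by simp
qed

end
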